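(* Let $X$ be a set of $n$ elements and let $\mathcal{P}$ be a family of subsets of $X$. Let $d \geq 1$ and $\delta \geq 1$ be integers such that the VC-dimension of $\mathcal{P}$ is at most $d$ and $|\Delta(S,T)| \geq \delta$ for all distinct $S, T \in \mathcal{P}$. Assume that $s = \frac{4dn}{\delta}$ is an integer with $s \leq n$. Let $A'$ be a subset of $X$ of size $s-1$ chosen uniformly at random among all $(s-1)$-element subsets of $X$. Then $$|\mathcal{P}| \leq 2 \cdot \mathbf{E}\big[\,|\mathcal{P}_{|A'}|\,\big].$$
   Context: For sets $R, S$, $\Delta(R,S) = (R \setminus S) \cup (S \setminus R)$ denotes the symmetric difference. For $Y \subseteq X$, the projection (trace) of $\mathcal{P}$ on $Y$ is $\mathcal{P}_{|Y} = \{ S \cap Y : S \in \mathcal{P}\}$, and $|\mathcal{P}_{|Y}|$ is the number of distinct sets in it. The VC-dimension of $\mathcal{P}$ is the largest size of a set $Y \subseteq X$ with $\mathcal{P}_{|Y} = 2^Y$. *)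

theory Defs
  imports "HOL-Probability.Probability"
begin

definition symdiff :: "'a set \<Rightarrow> 'a set \<Rightarrow> 'a set" where
  "symdiff R S = (R - S) \<union> (S - R)"

definition proj :: "'a set set \<Rightarrow> 'a set \<Rightarrow> 'a set set" where
  "proj P Y = {S \<inter> Y | S. S \<in> P}"

definition shatters :: "'a set set \<Rightarrow> 'a set \<Rightarrow> bool" where
  "shatters P Y \<longleftrightarrow> proj P Y = Pow Y"

text \<open>VC-dimension of a family P of subsets of ground set X: the largest size
  of a shattered subset of X (0 if there is none; X is assumed finite).\<close>
definition vc_dim :: "'a set \<Rightarrow> 'a set set \<Rightarrow> nat" where
  "vc_dim X P = Sup {card Y | Y. Y \<subseteq> X \<and> shatters P Y}"

end

theory Submission
  imports Defs
begin

text \<open>Haussler's argument. Weight every trace R \<subseteq> A by the number of members of P whose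
  trace on A is R, and let an edge {R, insert a R} of the cube on A count the smaller of its two
  end weights. Since the traces have VC-dimension at most d, the total edge weight is at most
  d |P| (by induction on A, compressing one coordinate at a time). Conversely, for |A'| = s - 1 the
  members of P with a common trace on A' are pairwise \<delta>-apart outside A', and counting
  coordinates shows that the edges in the directions a \<notin> A' of the cubes on insert a A' weigh at
  least \<delta> (|P| - |P|A'|) / 2. Double counting the pairs (A', a) gives
  E[|P| - |P|A'|] \<le> 2 d (n - s + 1) |P| / (s \<delta>), which is at most |P| / 2 for
  s = 4 d n / \<delta>.\<close>

lemma proj_eq_image: "proj P A = (\<lambda>S. S \<inter> A) ` P"
  unfolding proj_def by blast

lemma proj_proj: "Y \<subseteq> A \<Longrightarrow> proj (proj P A) Y = proj P Y"
  unfolding proj_eq_image image_image by (simp add: Int_assoc Int_absorb1)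

lemma shatters_iff: "shatters P Y \<longleftrightarrow> (\<forall>Z\<subseteq>Y. \<exists>S\<in>P. S \<inter> Y = Z)"
proof -
  have "proj P Y \<subseteq> Pow Y" unfolding proj_eq_image by blast
  then have "shatters P Y \<longleftrightarrow> Pow Y \<subseteq> proj P Y"
    unfolding shatters_def by blast
  also have "\<dots> \<longleftrightarrow> (\<forall>Z\<subseteq>Y. \<exists>S\<in>P. S \<inter> Y = Z)"
    unfolding proj_eq_image by blast
  finally show ?thesis .
qed

lemma card_proj_le: "finite P \<Longrightarrow> card (proj P A) \<le> card P"
  unfolding proj_eq_image by (rule card_image_le)

lemma card_le_vc_dim:
  assumes "finite X" "Y \<subseteq> X" "shatters P Y"
  shows "card Y \<le> vc_dim X P"
  unfolding vc_dim_def
proof (rule cSup_upper)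
  show "card Y \<in> {card Y |Y. Y \<subseteq> X \<and> shatters P Y}" using assms by blast
  show "bdd_above {card Y |Y. Y \<subseteq> X \<and> shatters P Y}"
    unfolding bdd_above_def using assms(1) by (auto intro: card_mono)
qed

lemma shatters_shift:
  assumes "shatters F Y" "x \<notin> Y" "\<And>T. T \<in> F \<Longrightarrow> T \<in> G \<or> insert x T \<in> G"
  shows "shatters G Y"
  unfolding shatters_iff
proof (intro allI impI)
  fix Z assume "Z \<subseteq> Y"
  then obtain T where T: "T \<in> F" "T \<inter> Y = Z" using assms(1) unfolding shatters_iff by blast
  have "insert x T \<inter> Y = Z" using T(2) assms(2) by blast
  with T assms(3) show "\<exists>S\<in>G. S \<inter> Y = Z" by blast
qed

lemma shatters_insert:
  assumes "shatters F Y" "\<And>T. T \<in> F \<Longrightarrow> x \<notin> T \<and> T \<in> G \<and> insert x T \<in> G"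
  shows "shatters G (insert x Y)"
  unfolding shatters_iff
proof (intro allI impI)
  fix Z assume Z: "Z \<subseteq> insert x Y"
  then have "Z - {x} \<subseteq> Y" by blast
  then obtain T where T: "T \<in> F" "T \<inter> Y = Z - {x}"
    using assms(1) unfolding shatters_iff by blast
  then have G: "x \<notin> T" "T \<in> G" "insert x T \<in> G" using assms(2) by blast+
  show "\<exists>S\<in>G. S \<inter> insert x Y = Z"
  proof (cases "x \<in> Z")
    case True
    then have "insert x T \<inter> insert x Y = Z" using T(2) Z by blast
    then show ?thesis using G(3) by blast
  next
    case False
    then have "T \<inter> insert x Y = Z" using T(2) G(1) by blast
    then show ?thesis using G(2) by blast
  qed
qed

lemma sum_Pow_insert:
  assumes "finite B" "x \<notin> B"
  shows "(\<Sum>R\<in>Pow (insert x B). g R) = (\<Sum>T\<in>Pow B. g T + g (insert x T))"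
proof -
  have inj: "inj_on (insert x) (Pow B)"
    unfolding inj_on_def using assms(2) by (metis PowD insert_ident subsetD)
  have "Pow B \<inter> insert x ` Pow B = {}" using assms(2) by auto
  then have "(\<Sum>R\<in>Pow (insert x B). g R) = (\<Sum>R\<in>Pow B. g R) + (\<Sum>R\<in>insert x ` Pow B. g R)"
    unfolding Pow_insert using assms(1) by (intro sum.union_disjoint) auto
  also have "(\<Sum>R\<in>insert x ` Pow B. g R) = (\<Sum>T\<in>Pow B. g (insert x T))"
    using sum.reindex[OF inj] by simp
  finally show ?thesis by (simp add: sum.distrib)
qed

definition edge_weight :: "('a set \<Rightarrow> nat) \<Rightarrow> 'a set \<Rightarrow> 'a \<Rightarrow> nat" where
  "edge_weight c B a = (\<Sum>R\<in>Pow B. min (c R) (c (insert a R)))"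

definition cube_edge_weight :: "'a set \<Rightarrow> ('a set \<Rightarrow> nat) \<Rightarrow> nat" where
  "cube_edge_weight A c = (\<Sum>a\<in>A. edge_weight c (A - {a}) a)"

definition fold_cube :: "(nat \<Rightarrow> nat \<Rightarrow> nat) \<Rightarrow> 'a \<Rightarrow> 'a set \<Rightarrow> ('a set \<Rightarrow> nat) \<Rightarrow> 'a set \<Rightarrow> nat" where
  "fold_cube f x B c T = (if T \<subseteq> B then f (c T) (c (insert x T)) else 0)"

lemma fold_cube_support: "{T. fold_cube f x B c T \<noteq> 0} \<subseteq> Pow B"
  unfolding fold_cube_def by auto

lemma sum_fold_cube_max_min:
  assumes "finite B" "x \<notin> B"
  shows "(\<Sum>Q\<in>Pow (insert x B). c Q)
    = (\<Sum>T\<in>Pow B. fold_cube max x B c T) + (\<Sum>T\<in>Pow B. fold_cube min x B c T)"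
proof -
  have "(\<Sum>Q\<in>Pow (insert x B). c Q) = (\<Sum>T\<in>Pow B. c T + c (insert x T))"
    using assms by (rule sum_Pow_insert)
  also have "\<dots> = (\<Sum>T\<in>Pow B. fold_cube max x B c T + fold_cube min x B c T)"
    unfolding fold_cube_def by (intro sum.cong) auto
  finally show ?thesis by (simp add: sum.distrib)
qed

lemma edge_weight_eq_sum_fold_cube_min: "edge_weight c B x = (\<Sum>T\<in>Pow B. fold_cube min x B c T)"
  unfolding edge_weight_def fold_cube_def by (intro sum.cong) auto

text \<open>The compression step rests on
  min p q + min p' q' \<le> min (max p p') (max q q') + min (min p p') (min q q').\<close>

lemma edge_weight_insert_le:
  assumes "finite B" "x \<notin> B" "a \<in> B"
  shows "edge_weight c (insert x B - {a}) a
    \<le> edge_weight (fold_cube max x B c) (B - {a}) a + edge_weight (fold_cube min x B c) (B - {a}) a"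
proof -
  have "insert x B - {a} = insert x (B - {a})" using assms(2,3) by auto
  then have "edge_weight c (insert x B - {a}) a
    = (\<Sum>T\<in>Pow (B - {a}). min (c T) (c (insert a T)) + min (c (insert x T)) (c (insert a (insert x T))))"
    unfolding edge_weight_def using assms(1,2) by (simp add: sum_Pow_insert)
  also have "\<dots> \<le> (\<Sum>T\<in>Pow (B - {a}).
      min (fold_cube max x B c T) (fold_cube max x B c (insert a T))
    + min (fold_cube min x B c T) (fold_cube min x B c (insert a T)))"
  proof (intro sum_mono)
    fix T assume "T \<in> Pow (B - {a})"
    then have "T \<subseteq> B" "insert a T \<subseteq> B" using assms(3) by auto
    then show "min (c T) (c (insert a T)) + min (c (insert x T)) (c (insert a (insert x T)))
      \<le> min (fold_cube max x B c T) (fold_cube max x B c (insert a T))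
       + min (fold_cube min x B c T) (fold_cube min x B c (insert a T))"
      unfolding fold_cube_def by (simp add: insert_commute min_def max_def)
  qed
  also have "\<dots> = edge_weight (fold_cube max x B c) (B - {a}) a
      + edge_weight (fold_cube min x B c) (B - {a}) a"
    unfolding edge_weight_def by (rule sum.distrib)
  finally show ?thesis .
qed

lemma shatters_fold_cube_max:
  assumes "x \<notin> Y" "shatters {T. fold_cube max x B c T \<noteq> 0} Y"
  shows "shatters {Q. c Q \<noteq> 0} Y"
  using assms(2,1) by (rule shatters_shift) (auto simp: fold_cube_def split: if_splits)

lemma shatters_fold_cube_min:
  assumes "x \<notin> B" "shatters {T. fold_cube min x B c T \<noteq> 0} Y"
  shows "shatters {Q. c Q \<noteq> 0} (insert x Y)"
  using assms(2) by (rule shatters_insert) (use assms(1) in \<open>auto simp: fold_cube_def split: if_splits\<close>)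

text \<open>Induction on A, compressing along the new coordinate x: the edges in direction x weigh
  exactly as much as the min part, whose VC-dimension drops to d - 1, so its share of the bound
  leaves room for them.\<close>

theorem cube_edge_weight_le:
  assumes "finite A" "{Q. c Q \<noteq> 0} \<subseteq> Pow A"
    and "\<And>Y. Y \<subseteq> A \<Longrightarrow> shatters {Q. c Q \<noteq> 0} Y \<Longrightarrow> card Y \<le> d"
  shows "cube_edge_weight A c \<le> d * (\<Sum>Q\<in>Pow A. c Q)"
  using assms
proof (induction A arbitrary: c d rule: finite_induct)
  case empty
  then show ?case by (simp add: cube_edge_weight_def)
next
  case (insert x B c d)
  let ?c1 = "fold_cube max x B c" and ?c2 = "fold_cube min x B c"
  have vc1: "card Y \<le> d" if "Y \<subseteq> B" "shatters {T. ?c1 T \<noteq> 0} Y" for Y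
    using that insert.hyps(2) insert.prems(2) shatters_fold_cube_max[of x Y B c] by blast
  have vc2: "card (insert x Y) \<le> d" if "Y \<subseteq> B" "shatters {T. ?c2 T \<noteq> 0} Y" for Y
    using that insert.hyps(2) insert.prems(2) shatters_fold_cube_min[of x B c Y] by blast
  have IH1: "cube_edge_weight B ?c1 \<le> d * (\<Sum>T\<in>Pow B. ?c1 T)"
    using fold_cube_support vc1 by (rule insert.IH)
  have IH2: "cube_edge_weight B ?c2 \<le> (d - 1) * (\<Sum>T\<in>Pow B. ?c2 T)"
  proof (rule insert.IH[OF fold_cube_support])
    fix Y assume Y: "Y \<subseteq> B" "shatters {T. ?c2 T \<noteq> 0} Y"
    have "finite Y" using Y(1) insert.hyps(1) by (rule finite_subset)
    moreover have "x \<notin> Y" using Y(1) insert.hyps(2) by blast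
    ultimately have "card (insert x Y) = Suc (card Y)" by simp
    with vc2[OF Y] show "card Y \<le> d - 1" by linarith
  qed
  have "cube_edge_weight (insert x B) c
      = edge_weight c B x + (\<Sum>a\<in>B. edge_weight c (insert x B - {a}) a)"
    unfolding cube_edge_weight_def using insert.hyps by (simp add: insert_Diff_if)
  also have "\<dots> \<le> (\<Sum>T\<in>Pow B. ?c2 T) + (cube_edge_weight B ?c1 + cube_edge_weight B ?c2)"
  proof -
    have "(\<Sum>a\<in>B. edge_weight c (insert x B - {a}) a)
        \<le> (\<Sum>a\<in>B. edge_weight ?c1 (B - {a}) a + edge_weight ?c2 (B - {a}) a)"
      using insert.hyps by (intro sum_mono edge_weight_insert_le)
    then show ?thesis
      by (simp add: edge_weight_eq_sum_fold_cube_min[of c B x] cube_edge_weight_def sum.distrib)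
  qed
  also have "\<dots> \<le> (\<Sum>T\<in>Pow B. ?c2 T) + d * (\<Sum>T\<in>Pow B. ?c1 T) + (d - 1) * (\<Sum>T\<in>Pow B. ?c2 T)"
    using IH1 IH2 by linarith
  also have "\<dots> \<le> d * (\<Sum>Q\<in>Pow (insert x B). c Q)"
  proof (cases "d = 0")
    case True
    \<comment> \<open>a nonzero min part would shatter {}, forcing card {x} \<le> d\<close>
    have "?c2 T = 0" for T
      using vc2[of "{}"] shatters_iff[of "{T. ?c2 T \<noteq> 0}" "{}"] True by auto
    then show ?thesis using True by simp
  next
    case False
    then have "(\<Sum>T\<in>Pow B. ?c2 T) + (d - 1) * (\<Sum>T\<in>Pow B. ?c2 T) = d * (\<Sum>T\<in>Pow B. ?c2 T)"
      by (cases d) simp_all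
    then show ?thesis
      unfolding sum_fold_cube_max_min[OF insert.hyps] by (simp add: algebra_simps)
  qed
  finally show ?case .
qed

definition trace_mult :: "'a set set \<Rightarrow> 'a set \<Rightarrow> 'a set \<Rightarrow> nat" where
  "trace_mult P A R = card {S \<in> P. S \<inter> A = R}"

lemma sum_trace_mult:
  assumes "finite P" "finite A"
  shows "(\<Sum>R\<in>Pow A. trace_mult P A R) = card P"
proof -
  have "(\<Sum>R\<in>Pow A. \<Sum>S\<in>{S \<in> P. S \<inter> A = R}. 1::nat) = (\<Sum>S\<in>P. 1)"
    using assms by (intro sum.group) auto
  then show ?thesis unfolding trace_mult_def by simp
qed

lemma trace_mult_support:
  assumes "finite P"
  shows "{R. trace_mult P A R \<noteq> 0} = proj P A"
proof -
  have "trace_mult P A R \<noteq> 0 \<longleftrightarrow> (\<exists>S\<in>P. S \<inter> A = R)" for R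
    unfolding trace_mult_def using assms by auto
  then show ?thesis unfolding proj_eq_image image_def by auto
qed

lemma sum_trace_mult_minus_one:
  assumes "finite P" "finite A"
  shows "(\<Sum>R\<in>Pow A. trace_mult P A R - 1) = card P - card (proj P A)"
proof -
  have "(\<Sum>R\<in>Pow A. trace_mult P A R - 1) = (\<Sum>R\<in>Pow A. trace_mult P A R - of_bool (trace_mult P A R \<noteq> 0))"
    by (intro sum.cong) auto
  also have "\<dots> = card P - card (Pow A \<inter> {R. trace_mult P A R \<noteq> 0})"
    using assms by (subst sum_subtractf_nat) (auto simp: sum_trace_mult)
  also have "Pow A \<inter> {R. trace_mult P A R \<noteq> 0} = proj P A"
    unfolding trace_mult_support[OF assms(1)] proj_eq_image by blast
  finally show ?thesis .
qed

theorem cube_edge_weight_trace_le: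
  assumes "finite X" "P \<subseteq> Pow X" "A \<subseteq> X" "vc_dim X P \<le> d"
  shows "cube_edge_weight A (trace_mult P A) \<le> d * card P"
proof -
  have fP: "finite P" and fA: "finite A"
    using assms(1-3) by (meson finite_Pow_iff finite_subset)+
  have "cube_edge_weight A (trace_mult P A) \<le> d * (\<Sum>R\<in>Pow A. trace_mult P A R)"
  proof (rule cube_edge_weight_le[OF fA])
    show "{R. trace_mult P A R \<noteq> 0} \<subseteq> Pow A"
      unfolding trace_mult_support[OF fP] proj_eq_image by blast
    fix Y assume "Y \<subseteq> A" "shatters {R. trace_mult P A R \<noteq> 0} Y"
    then have "shatters P Y"
      unfolding trace_mult_support[OF fP] shatters_def by (simp add: proj_proj)
    moreover have "Y \<subseteq> X" using \<open>Y \<subseteq> A\<close> assms(3) by (rule order_trans)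
    ultimately show "card Y \<le> d"
      using card_le_vc_dim[OF assms(1)] assms(4) by (meson order_trans)
  qed
  then show ?thesis by (simp add: sum_trace_mult[OF fP fA])
qed

lemma mult_le_add_mult_min: "(u::nat) * v \<le> (u + v) * min u v"
  by (cases "u \<le> v") (simp_all add: algebra_simps min_def)

lemma card_symdiff:
  assumes "finite (S - T)" "finite (T - S)"
  shows "card (symdiff S T) = card (S - T) + card (T - S)"
  unfolding symdiff_def using assms by (intro card_Un_disjoint) auto

lemma sum_card_mem_times_card_nonmem:
  assumes "finite U" "finite C" "\<And>S T. S \<in> C \<Longrightarrow> T \<in> C \<Longrightarrow> S - T \<subseteq> U"
  shows "(\<Sum>a\<in>U. card {S \<in> C. a \<in> S} * card {T \<in> C. a \<notin> T}) = (\<Sum>S\<in>C. \<Sum>T\<in>C. card (S - T))"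
proof -
  have "card {S \<in> C. a \<in> S} * card {T \<in> C. a \<notin> T}
      = (\<Sum>S\<in>C. \<Sum>T\<in>C. of_bool (a \<in> S - T))" for a
  proof -
    have "card {S \<in> C. Q S} = (\<Sum>S\<in>C. of_bool (Q S))" for Q
      using assms(2) by (simp add: Int_def)
    then show ?thesis by (simp add: sum_product of_bool_conj)
  qed
  then have "(\<Sum>a\<in>U. card {S \<in> C. a \<in> S} * card {T \<in> C. a \<notin> T})
      = (\<Sum>a\<in>U. \<Sum>S\<in>C. \<Sum>T\<in>C. of_bool (a \<in> S - T))"
    by simp
  also have "\<dots> = (\<Sum>S\<in>C. \<Sum>T\<in>C. \<Sum>a\<in>U. of_bool (a \<in> S - T))"
    by (subst sum.swap) (intro sum.cong refl sum.swap)
  also have "\<dots> = (\<Sum>S\<in>C. \<Sum>T\<in>C. card (S - T))"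
  proof (intro sum.cong refl)
    fix S T assume "S \<in> C" "T \<in> C"
    then have "U \<inter> {a. a \<in> S - T} = S - T" using assms(3) by blast
    then show "(\<Sum>a\<in>U. of_bool (a \<in> S - T)) = card (S - T)" using assms(1) by simp
  qed
  finally show ?thesis .
qed

text \<open>Double counting the ordered pairs of members split by a coordinate a \<in> U: they number
  at least m (m - 1) \<delta> / 2, and u v \<le> m min u v for the sizes u, v of the two sides of the split.\<close>

theorem separated_family_card_le:
  assumes "finite U" "finite C"
    and sub: "\<And>S T. S \<in> C \<Longrightarrow> T \<in> C \<Longrightarrow> S - T \<subseteq> U"
    and sep: "\<And>S T. S \<in> C \<Longrightarrow> T \<in> C \<Longrightarrow> S \<noteq> T \<Longrightarrow> \<delta> \<le> card (symdiff S T)"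
  shows "\<delta> * (card C - 1) \<le> 2 * (\<Sum>a\<in>U. min (card {S \<in> C. a \<notin> S}) (card {S \<in> C. a \<in> S}))"
proof -
  define m where "m = card C"
  have split: "card {S \<in> C. a \<in> S} + card {S \<in> C. a \<notin> S} = m" for a
  proof -
    have "{S \<in> C. a \<in> S} \<union> {S \<in> C. a \<notin> S} = C" "{S \<in> C. a \<in> S} \<inter> {S \<in> C. a \<notin> S} = {}"
      by auto
    then show ?thesis unfolding m_def using assms(2) by (metis card_Un_disjoint finite_Un)
  qed
  have row: "(m - 1) * \<delta> \<le> (\<Sum>T\<in>C. card (symdiff S T))" if "S \<in> C" for S
  proof -
    have "(m - 1) * \<delta> = (\<Sum>T\<in>C - {S}. \<delta>)"
      unfolding m_def using that assms(2) by simp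
    also have "\<dots> \<le> (\<Sum>T\<in>C - {S}. card (symdiff S T))"
      using sep that by (intro sum_mono) auto
    also have "\<dots> \<le> (\<Sum>T\<in>C. card (symdiff S T))"
      using assms(2) by (intro sum_mono2) auto
    finally show ?thesis .
  qed
  have "m * ((m - 1) * \<delta>) \<le> (\<Sum>S\<in>C. \<Sum>T\<in>C. card (symdiff S T))"
    using sum_mono[OF row] unfolding m_def by simp
  also have "\<dots> = (\<Sum>S\<in>C. \<Sum>T\<in>C. card (S - T) + card (T - S))"
    using sub finite_subset[OF sub assms(1)] by (intro sum.cong refl card_symdiff)
  also have "\<dots> = 2 * (\<Sum>S\<in>C. \<Sum>T\<in>C. card (S - T))"
    using sum.swap[of "\<lambda>S T. card (T - S)" C C] by (simp add: sum.distrib)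
  also have "\<dots> = 2 * (\<Sum>a\<in>U. card {S \<in> C. a \<in> S} * card {S \<in> C. a \<notin> S})"
    by (simp add: sum_card_mem_times_card_nonmem[OF assms(1,2) sub])
  also have "\<dots> \<le> 2 * (\<Sum>a\<in>U. m * min (card {S \<in> C. a \<notin> S}) (card {S \<in> C. a \<in> S}))"
  proof (intro mult_left_mono sum_mono)
    fix a
    show "card {S \<in> C. a \<in> S} * card {S \<in> C. a \<notin> S} \<le> m * min (card {S \<in> C. a \<notin> S}) (card {S \<in> C. a \<in> S})"
      using mult_le_add_mult_min[of "card {S \<in> C. a \<in> S}" "card {S \<in> C. a \<notin> S}"] split[of a]
      by (simp add: min.commute)
  qed simp
  also have "\<dots> = m * (2 * (\<Sum>a\<in>U. min (card {S \<in> C. a \<notin> S}) (card {S \<in> C. a \<in> S})))"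
    by (simp add: sum_distrib_left mult.left_commute)
  finally have "0 < m \<longrightarrow> (m - 1) * \<delta> \<le> 2 * (\<Sum>a\<in>U. min (card {S \<in> C. a \<notin> S}) (card {S \<in> C. a \<in> S}))"
    by (simp only: mult_le_cancel1)
  then show ?thesis
    unfolding m_def[symmetric] by (cases "m = 0") (simp_all add: mult.commute)
qed

lemma trace_mult_insert:
  assumes "R \<subseteq> A" "a \<notin> A"
  shows "trace_mult P (insert a A) R = card {S \<in> {S \<in> P. S \<inter> A = R}. a \<notin> S}"
    and "trace_mult P (insert a A) (insert a R) = card {S \<in> {S \<in> P. S \<inter> A = R}. a \<in> S}"
proof -
  have "{S \<in> P. S \<inter> insert a A = R} = {S \<in> {S \<in> P. S \<inter> A = R}. a \<notin> S}"
    using assms by auto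
  then show "trace_mult P (insert a A) R = card {S \<in> {S \<in> P. S \<inter> A = R}. a \<notin> S}"
    unfolding trace_mult_def by simp
  have "{S \<in> P. S \<inter> insert a A = insert a R} = {S \<in> {S \<in> P. S \<inter> A = R}. a \<in> S}"
    using assms by auto
  then show "trace_mult P (insert a A) (insert a R) = card {S \<in> {S \<in> P. S \<inter> A = R}. a \<in> S}"
    unfolding trace_mult_def by simp
qed

text \<open>The members of P with trace R on A are pairwise \<delta>-separated by coordinates outside A, and
  splitting them at a \<notin> A yields exactly the two ends of the edge above R of the cube on
  insert a A.\<close>

theorem card_minus_card_proj_le:
  assumes "finite X" "P \<subseteq> Pow X" "A \<subseteq> X"
    and sep: "\<And>S T. S \<in> P \<Longrightarrow> T \<in> P \<Longrightarrow> S \<noteq> T \<Longrightarrow> \<delta> \<le> card (symdiff S T)"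
  shows "\<delta> * (card P - card (proj P A))
    \<le> 2 * (\<Sum>a\<in>X - A. edge_weight (trace_mult P (insert a A)) A a)"
proof -
  have fP: "finite P" and fA: "finite A"
    using assms(1-3) by (meson finite_Pow_iff finite_subset)+
  let ?C = "\<lambda>R. {S \<in> P. S \<inter> A = R}"
  have "\<delta> * (card P - card (proj P A)) = (\<Sum>R\<in>Pow A. \<delta> * (trace_mult P A R - 1))"
    unfolding sum_distrib_left[symmetric] sum_trace_mult_minus_one[OF fP fA] ..
  also have "\<dots> \<le> (\<Sum>R\<in>Pow A. 2 * (\<Sum>a\<in>X - A. min (card {S \<in> ?C R. a \<notin> S}) (card {S \<in> ?C R. a \<in> S})))"
  proof (intro sum_mono)
    fix R
    have "\<delta> * (card (?C R) - 1)
        \<le> 2 * (\<Sum>a\<in>X - A. min (card {S \<in> ?C R. a \<notin> S}) (card {S \<in> ?C R. a \<in> S}))"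
    proof (rule separated_family_card_le)
      show "finite (X - A)" "finite (?C R)" using assms(1) fP by simp_all
      fix S T assume "S \<in> ?C R" "T \<in> ?C R"
      then show "S - T \<subseteq> X - A" using assms(2) by blast
      show "S \<noteq> T \<Longrightarrow> \<delta> \<le> card (symdiff S T)" using sep \<open>S \<in> ?C R\<close> \<open>T \<in> ?C R\<close> by blast
    qed
    then show "\<delta> * (trace_mult P A R - 1)
        \<le> 2 * (\<Sum>a\<in>X - A. min (card {S \<in> ?C R. a \<notin> S}) (card {S \<in> ?C R. a \<in> S}))"
      unfolding trace_mult_def .
  qed
  also have "\<dots> = 2 * (\<Sum>a\<in>X - A. \<Sum>R\<in>Pow A. min (card {S \<in> ?C R. a \<notin> S}) (card {S \<in> ?C R. a \<in> S}))"
    by (simp add: sum_distrib_left[symmetric] sum.swap[of _ "Pow A"])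
  also have "\<dots> = 2 * (\<Sum>a\<in>X - A. edge_weight (trace_mult P (insert a A)) A a)"
    unfolding edge_weight_def by (intro arg_cong[where f = "(*) 2"] sum.cong refl) (simp add: trace_mult_insert)
  finally show ?thesis .
qed

lemma sum_subsets_card_pred_eq:
  fixes g :: "'a set \<Rightarrow> 'a \<Rightarrow> 'b::comm_monoid_add"
  assumes "finite X" "s \<ge> 1"
  shows "(\<Sum>A\<in>{A. A \<subseteq> X \<and> card A = s - 1}. \<Sum>a\<in>X - A. g A a)
       = (\<Sum>A\<in>{A. A \<subseteq> X \<and> card A = s}. \<Sum>a\<in>A. g (A - {a}) a)"
proof -
  let ?AA = "{A. A \<subseteq> X \<and> card A = s - 1}" and ?BB = "{A. A \<subseteq> X \<and> card A = s}"
  have fin: "finite A" if "A \<subseteq> X" for A using that assms(1) finite_subset by blast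
  have fAA: "finite ?AA" and fBB: "finite ?BB" using assms(1) by auto
  have card_insert: "card (insert a A) = s" if "A \<subseteq> X" "card A = s - 1" "a \<notin> A" for A a
    using that assms(2) fin[of A] by simp
  have "(\<Sum>A\<in>?AA. \<Sum>a\<in>X - A. g A a) = (\<Sum>(A, a)\<in>Sigma ?AA (\<lambda>A. X - A). g A a)"
    by (rule sum.Sigma) (use fAA assms(1) in auto)
  also have "\<dots> = (\<Sum>(A, a)\<in>Sigma ?BB (\<lambda>A. A). g (A - {a}) a)"
    by (rule sum.reindex_bij_witness[where j = "\<lambda>(A, a). (insert a A, a)" and i = "\<lambda>(A, a). (A - {a}, a)"])
      (auto simp: card_insert)
  also have "\<dots> = (\<Sum>A\<in>?BB. \<Sum>a\<in>A. g (A - {a}) a)"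
    by (rule sum.Sigma[symmetric]) (use fBB fin in auto)
  finally show ?thesis .
qed

lemma card_subsets_card_pred:
  assumes "finite X" "s \<ge> 1"
  shows "s * card {A. A \<subseteq> X \<and> card A = s} = (card X - (s - 1)) * card {A. A \<subseteq> X \<and> card A = s - 1}"
proof -
  have "(\<Sum>A\<in>{A. A \<subseteq> X \<and> card A = s - 1}. card (X - A))
      = (\<Sum>A\<in>{A. A \<subseteq> X \<and> card A = s}. card A)"
    using sum_subsets_card_pred_eq[OF assms, of "\<lambda>_ _. 1::nat"] by simp
  moreover have "card (X - A) = card X - (s - 1)" if "A \<subseteq> X" "card A = s - 1" for A
    using that assms(1) by (simp add: card_Diff_subset finite_subset)
  ultimately show ?thesis by (simp add: mult.commute)
qed

theorem sum_card_minus_card_proj_le: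
  assumes "finite X" "P \<subseteq> Pow X" "vc_dim X P \<le> d" "s \<ge> 1"
    and sep: "\<And>S T. S \<in> P \<Longrightarrow> T \<in> P \<Longrightarrow> S \<noteq> T \<Longrightarrow> \<delta> \<le> card (symdiff S T)"
  shows "s * (\<delta> * (\<Sum>A\<in>{A. A \<subseteq> X \<and> card A = s - 1}. card P - card (proj P A)))
    \<le> 2 * d * card P * ((card X - (s - 1)) * card {A. A \<subseteq> X \<and> card A = s - 1})"
proof -
  let ?AA = "{A. A \<subseteq> X \<and> card A = s - 1}" and ?BB = "{A. A \<subseteq> X \<and> card A = s}"
  let ?w = "\<lambda>A a. edge_weight (trace_mult P (insert a A)) A a"
  have "\<delta> * (\<Sum>A\<in>?AA. card P - card (proj P A)) = (\<Sum>A\<in>?AA. \<delta> * (card P - card (proj P A)))"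
    by (rule sum_distrib_left)
  also have "\<dots> \<le> (\<Sum>A\<in>?AA. 2 * (\<Sum>a\<in>X - A. ?w A a))"
    using assms(1,2) sep by (intro sum_mono card_minus_card_proj_le) auto
  also have "\<dots> = 2 * (\<Sum>A\<in>?BB. \<Sum>a\<in>A. ?w (A - {a}) a)"
    unfolding sum_distrib_left[symmetric] by (rule arg_cong[OF sum_subsets_card_pred_eq[OF assms(1,4)]])
  also have "\<dots> = 2 * (\<Sum>A\<in>?BB. cube_edge_weight A (trace_mult P A))"
    unfolding cube_edge_weight_def by (simp add: insert_absorb)
  also have "\<dots> \<le> 2 * (\<Sum>A\<in>?BB. d * card P)"
    using assms(1-3) by (intro mult_left_mono sum_mono cube_edge_weight_trace_le) auto
  also have "\<dots> = 2 * d * card P * card ?BB"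
    by simp
  finally have "s * (\<delta> * (\<Sum>A\<in>?AA. card P - card (proj P A))) \<le> s * (2 * d * card P * card ?BB)"
    by (rule mult_left_mono) simp
  also have "\<dots> = 2 * d * card P * (s * card ?BB)"
    by (simp only: mult_ac)
  finally show ?thesis unfolding card_subsets_card_pred[OF assms(1,4)] .
qed

theorem card_minus_expectation_card_proj_le:
  assumes "finite X" "P \<subseteq> Pow X" "vc_dim X P \<le> d" "s \<ge> 1" "s - 1 \<le> card X"
    and sep: "\<And>S T. S \<in> P \<Longrightarrow> T \<in> P \<Longrightarrow> S \<noteq> T \<Longrightarrow> \<delta> \<le> card (symdiff S T)"
  shows "real s * real \<delta> * (real (card P) - measure_pmf.expectation
            (pmf_of_set {A. A \<subseteq> X \<and> card A = s - 1}) (\<lambda>A. real (card (proj P A))))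
    \<le> 2 * real d * real (card X - (s - 1)) * real (card P)"
proof -
  let ?AA = "{A. A \<subseteq> X \<and> card A = s - 1}"
  have fP: "finite P" using assms(1,2) by (meson finite_Pow_iff finite_subset)
  have fAA: "finite ?AA" using assms(1) by simp
  obtain A0 where "A0 \<subseteq> X" "card A0 = s - 1"
    using assms(5) by (meson obtain_subset_with_card_n)
  then have neAA: "?AA \<noteq> {}" by blast
  then have N: "real (card ?AA) > 0" using fAA by (simp add: card_gt_0_iff)
  define N where "N = real (card ?AA)"
  define F where "F = (\<Sum>A\<in>?AA. real (card (proj P A)))"
  have "real (\<Sum>A\<in>?AA. card P - card (proj P A)) = N * real (card P) - F"
    unfolding N_def F_def using card_proj_le[OF fP] by (simp add: of_nat_diff sum_subtractf)
  moreover have "real (s * (\<delta> * (\<Sum>A\<in>?AA. card P - card (proj P A))))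
      \<le> real (2 * d * card P * ((card X - (s - 1)) * card ?AA))"
    unfolding of_nat_le_iff by (rule sum_card_minus_card_proj_le[OF assms(1-4) sep])
  ultimately have "real s * real \<delta> * (N * real (card P) - F)
      \<le> 2 * real d * real (card X - (s - 1)) * real (card P) * N"
    unfolding N_def by (simp add: ac_simps)
  moreover have "real s * real \<delta> * (N * real (card P) - F)
      = real s * real \<delta> * (real (card P) - F / N) * N"
    using N unfolding N_def by (simp add: field_simps)
  ultimately show ?thesis
    using N unfolding integral_pmf_of_set[OF neAA fAA] N_def[symmetric] F_def[symmetric]
    by (simp add: mult_le_cancel_right_pos)
qed

theorem lemma1:
  fixes X :: "'a set" and P :: "'a set set" and n d \<delta> s :: nat
  assumes "finite X" and "card X = n"
    and "P \<subseteq> Pow X"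
    and "d \<ge> 1" and "\<delta> \<ge> 1"
    and "vc_dim X P \<le> d"
    and "\<And>S T. S \<in> P \<Longrightarrow> T \<in> P \<Longrightarrow> S \<noteq> T \<Longrightarrow> card (symdiff S T) \<ge> \<delta>"
    and "real s = 4 * real d * real n / real \<delta>"
    and "s \<le> n"
  shows "real (card P) \<le> 2 * measure_pmf.expectation
            (pmf_of_set {A. A \<subseteq> X \<and> card A = s - 1}) (\<lambda>A. real (card (proj P A)))"
proof (cases "s = 0")
  case True
  then have "X = {}" using assms(1,2,4,5,8) by simp
  then have "{A. A \<subseteq> X \<and> card A = s - 1} = {{}}" and "proj P {} = P"
    using assms(3) True unfolding proj_eq_image by auto
  then show ?thesis by (subst integral_pmf_of_set) simp_all
next
  case False
  let ?E = "measure_pmf.expectation (pmf_of_set {A. A \<subseteq> X \<and> card A = s - 1}) (\<lambda>A. real (card (proj P A)))"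
  have sd: "real s * real \<delta> = 4 * real d * real n" using assms(5,8) by (simp add: field_simps)
  have "real s * real \<delta> * (real (card P) - ?E) \<le> 2 * real d * real (n - (s - 1)) * real (card P)"
    using card_minus_expectation_card_proj_le[OF assms(1,3,6) _ _ assms(7)] False assms(2,9) by simp
  also have "\<dots> \<le> 2 * real d * real n * real (card P)"
    by (intro mult_right_mono mult_left_mono) simp_all
  finally have "real s * real \<delta> * (real (card P) - ?E) \<le> real s * real \<delta> * (real (card P) / 2)"
    unfolding sd by simp
  moreover have "real s * real \<delta> > 0" using False assms(5) by simp
  ultimately have "real (card P) - ?E \<le> real (card P) / 2"
    by (simp only: mult_le_cancel_left_pos)
  then show ?thesis by linarith
qed

end
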